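(* Let $\alpha>0$, $a,c\in\mathbb C$, and $g(z)=\exp\left(\alpha az+\frac{\alpha}{2}cz^2\right)$ for $z\in\mathbb C$. If $1\le p<\infty$, then $g\in\mathcal{H}^1_{p,\alpha}$ if and only if $|c|<1$, and in this case \[ \|g\|_{p,\alpha}=\frac{1}{(1-|c|^2)^{1/(2p)}}\exp\left(\frac{\alpha}{2}\,\frac{|a|^2+\Re(\overline c a^2)}{1-|c|^2}\right). \]
   Context: For $\alpha>0$, $\gamma^1_\alpha(dz)=(\alpha/\pi)e^{-\alpha|z|^2}\lambda(dz)$ on $\mathbb C$, with $\lambda$ Lebesgue measure. $\mathcal{H}^1_{p,\alpha}$ is the space of entire functions $f$ with $\|f\|_{p,\alpha}:=\left(\int_{\mathbb C}|f|^p\,d\gamma^1_{\alpha p/2}\right)^{1/p}<\infty$. *)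

theory Defs
  imports "HOL-Analysis.Analysis"
begin

definition gauss_density :: "real \<Rightarrow> complex \<Rightarrow> real" where
  "gauss_density \<alpha> z = (\<alpha> / pi) * exp (- \<alpha> * (cmod z)\<^sup>2)"

definition gauss_measure :: "real \<Rightarrow> complex measure" where
  "gauss_measure \<alpha> = density lborel (\<lambda>z. ennreal (gauss_density \<alpha> z))"

definition fock_space :: "real \<Rightarrow> real \<Rightarrow> (complex \<Rightarrow> complex) set" where
  "fock_space p \<alpha> = {f. f holomorphic_on UNIV \<and>
      (\<integral>\<^sup>+ z. ennreal (cmod (f z) powr p) \<partial>gauss_measure (\<alpha> * p / 2)) < \<infinity>}"

definition fock_norm :: "real \<Rightarrow> real \<Rightarrow> (complex \<Rightarrow> complex) \<Rightarrow> real" where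
  "fock_norm p \<alpha> f = (\<integral> z. cmod (f z) powr p \<partial>gauss_measure (\<alpha> * p / 2)) powr (1 / p)"

end

theory Submission
  imports Defs "HOL-Probability.Probability"
begin

text \<open>Writing \<open>z = x + i y\<close>, the integrand \<open>|g|\<^sup>p\<close> times the Gaussian density is the exponential of a
  real quadratic polynomial in \<open>(x, y)\<close>. Its quadratic part is negative definite exactly when
  \<open>|c| < 1\<close>; otherwise the integral diverges already along one variable. In the definite case,
  integrating out \<open>y\<close> and then \<open>x\<close> by completing the square gives
  \<open>\<pi> / sqrt(det) \<cdot> exp(\<dots>)\<close>, and the determinant and exponent simplify to the stated formula.\<close>

lemma measurable_Complex_pair [measurable]:
  "(\<lambda>p::real \<times> real. Complex (fst p) (snd p)) \<in> borel_measurable (lborel \<Otimes>\<^sub>M lborel)"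
proof -
  have "(\<lambda>p::real \<times> real. Complex (fst p) (snd p)) = (\<lambda>p. of_real (fst p) + \<i> * of_real (snd p))"
    by (auto simp: complex_eq_iff)
  then show ?thesis by simp
qed

lemma lborel_complex_eq_distr_pair:
  "(lborel :: complex measure) = distr (lborel \<Otimes>\<^sub>M lborel) borel (\<lambda>p. Complex (fst p) (snd p))"
proof (rule lborel_eqI)
  fix l u :: complex
  assume le: "\<And>b. b \<in> Basis \<Longrightarrow> l \<bullet> b \<le> u \<bullet> b"
  have Re: "Re l \<le> Re u" and Im: "Im l \<le> Im u"
    using le[of 1] le[of \<i>] by auto
  have "(\<lambda>p. Complex (fst p) (snd p)) -` box l u \<inter> space (lborel \<Otimes>\<^sub>M lborel)
      = box (Re l) (Re u) \<times> box (Im l) (Im u)"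
    by (auto simp: box_def Basis_complex_def space_pair_measure)
  then have "emeasure (distr (lborel \<Otimes>\<^sub>M lborel) borel (\<lambda>p. Complex (fst p) (snd p))) (box l u)
      = emeasure (lborel \<Otimes>\<^sub>M lborel) (box (Re l) (Re u) \<times> box (Im l) (Im u))"
    by (subst emeasure_distr) auto
  also have "\<dots> = (\<Prod>b\<in>Basis. (u - l) \<bullet> b)"
    using Re Im by (simp add: lborel.emeasure_pair_measure_Times Basis_complex_def ennreal_mult)
  finally show "emeasure (distr (lborel \<Otimes>\<^sub>M lborel) borel (\<lambda>p. Complex (fst p) (snd p))) (box l u)
      = (\<Prod>b\<in>Basis. (u - l) \<bullet> b)" .
qed simp

lemma nn_integral_lborel_complex:
  assumes [measurable]: "f \<in> borel_measurable (borel :: complex measure)"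
  shows "(\<integral>\<^sup>+z. f z \<partial>lborel) = (\<integral>\<^sup>+x. \<integral>\<^sup>+y. f (Complex x y) \<partial>lborel \<partial>lborel)"
proof -
  have "(\<integral>\<^sup>+z. f z \<partial>lborel) = (\<integral>\<^sup>+p. f (Complex (fst p) (snd p)) \<partial>(lborel \<Otimes>\<^sub>M lborel))"
    by (subst lborel_complex_eq_distr_pair) (simp add: nn_integral_distr)
  also have "\<dots> = (\<integral>\<^sup>+x. \<integral>\<^sup>+y. f (Complex x y) \<partial>lborel \<partial>lborel)"
    using lborel.nn_integral_fst[of "\<lambda>p. f (Complex (fst p) (snd p))" lborel] by simp
  finally show ?thesis .
qed

lemma nn_integral_exp_quadratic:
  fixes A B :: real
  assumes A: "A > 0"
  shows "(\<integral>\<^sup>+x. ennreal (exp (- A * x\<^sup>2 + B * x)) \<partial>lborel) = ennreal (sqrt (pi / A) * exp (B\<^sup>2 / (4 * A)))"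
proof -
  define \<mu> where "\<mu> = B / (2 * A)"
  define \<sigma> where "\<sigma> = 1 / sqrt (2 * A)"
  have \<sigma>2: "\<sigma>\<^sup>2 = 1 / (2 * A)"
    using A by (simp add: \<sigma>_def power_divide)
  have density: "normal_density \<mu> \<sigma> x = sqrt (A / pi) * exp (- A * (x - \<mu>)\<^sup>2)" for x
    using A by (simp add: normal_density_def \<sigma>2 real_sqrt_divide)
  have complete_square: "exp (- A * x\<^sup>2 + B * x)
      = sqrt (pi / A) * exp (B\<^sup>2 / (4 * A)) * normal_density \<mu> \<sigma> x" for x
  proof -
    have "- A * x\<^sup>2 + B * x = B\<^sup>2 / (4 * A) + - A * (x - \<mu>)\<^sup>2"
      using A by (simp add: \<mu>_def field_simps power2_eq_square)
    then have "exp (- A * x\<^sup>2 + B * x) = exp (B\<^sup>2 / (4 * A)) * exp (- A * (x - \<mu>)\<^sup>2)"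
      by (simp only: exp_add)
    also have "exp (- A * (x - \<mu>)\<^sup>2) = sqrt (pi / A) * normal_density \<mu> \<sigma> x"
      using A by (simp add: density mult.assoc[symmetric] real_sqrt_mult[symmetric])
    finally show ?thesis
      by (simp only: mult_ac)
  qed
  have "(\<integral>\<^sup>+x. ennreal (exp (- A * x\<^sup>2 + B * x)) \<partial>lborel)
      = (\<integral>\<^sup>+x. ennreal (sqrt (pi / A) * exp (B\<^sup>2 / (4 * A))) * ennreal (normal_density \<mu> \<sigma> x) \<partial>lborel)"
    by (intro nn_integral_cong, subst complete_square, rule ennreal_mult) (use A in auto)
  also have "\<dots> = ennreal (sqrt (pi / A) * exp (B\<^sup>2 / (4 * A))) * (\<integral>\<^sup>+x. ennreal (normal_density \<mu> \<sigma> x) \<partial>lborel)"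
    by (rule nn_integral_cmult) simp
  also have "(\<integral>\<^sup>+x. ennreal (normal_density \<mu> \<sigma> x) \<partial>lborel) = 1"
    using A by (subst nn_integral_eq_integral)
      (auto simp: \<sigma>_def intro!: integrable_normal_density integral_normal_density)
  finally show ?thesis by simp
qed

lemma nn_integral_exp_quadratic_divergent:
  fixes A B :: real
  assumes A: "A \<le> 0"
  shows "(\<integral>\<^sup>+x. ennreal (exp (- A * x\<^sup>2 + B * x)) \<partial>lborel) = \<infinity>"
proof -
  let ?f = "\<lambda>x. ennreal (exp (- A * x\<^sup>2 + B * x))"
  have reflect: "(\<integral>\<^sup>+x. ?f (0 + (-1) * x) \<partial>lborel) = (\<integral>\<^sup>+x. ?f x \<partial>lborel)"
    using nn_integral_real_affine[of ?f "-1" 0] by simp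
  \<comment> \<open>At each point one of the two exponents is nonnegative.\<close>
  have "(1::ennreal) \<le> ?f x + ?f (0 + (-1) * x)" for x
  proof -
    have "0 \<le> - A * x\<^sup>2" using A by (simp add: mult_nonpos_nonneg)
    then have "1 \<le> exp (- A * x\<^sup>2 + B * x) + exp (- A * x\<^sup>2 + B * (-x))"
      by (cases "B * x \<ge> 0") (auto intro: add_increasing add_increasing2 less_imp_le)
    then show ?thesis by (simp add: ennreal_plus[symmetric] del: ennreal_plus)
  qed
  then have "(\<integral>\<^sup>+(x::real). 1 \<partial>lborel) \<le> (\<integral>\<^sup>+x. ?f x + ?f (0 + (-1) * x) \<partial>lborel)"
    by (intro nn_integral_mono)
  also have "\<dots> = (\<integral>\<^sup>+x. ?f x \<partial>lborel) + (\<integral>\<^sup>+x. ?f (0 + (-1) * x) \<partial>lborel)"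
    by (rule nn_integral_add) auto
  also have "\<dots> = 2 * (\<integral>\<^sup>+x. ?f x \<partial>lborel)"
    unfolding reflect by (simp add: mult_2)
  finally show ?thesis by (simp add: top_unique ennreal_mult_eq_top_iff)
qed

lemma nn_integral_exp_binary_quadratic_inner:
  fixes A B C D E x :: real
  shows "(\<integral>\<^sup>+y. ennreal (exp (- (A * x\<^sup>2 + 2 * B * x * y + C * y\<^sup>2) + D * x + E * y)) \<partial>lborel)
    = ennreal (exp (- A * x\<^sup>2 + D * x)) * (\<integral>\<^sup>+y. ennreal (exp (- C * y\<^sup>2 + (E - 2 * B * x) * y)) \<partial>lborel)"
proof -
  have "exp (- (A * x\<^sup>2 + 2 * B * x * y + C * y\<^sup>2) + D * x + E * y)
      = exp (- A * x\<^sup>2 + D * x) * exp (- C * y\<^sup>2 + (E - 2 * B * x) * y)" for y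
    by (simp add: exp_add[symmetric] algebra_simps)
  then show ?thesis
    by (simp add: ennreal_mult nn_integral_cmult)
qed

lemma nn_integral_exp_binary_quadratic:
  fixes A B C D E :: real
  shows "(\<integral>\<^sup>+x. \<integral>\<^sup>+y. ennreal (exp (- (A * x\<^sup>2 + 2 * B * x * y + C * y\<^sup>2) + D * x + E * y)) \<partial>lborel \<partial>lborel)
    = (if C > 0 \<and> A * C - B\<^sup>2 > 0
       then ennreal (pi / sqrt (A * C - B\<^sup>2) * exp ((A * E\<^sup>2 + C * D\<^sup>2 - 2 * B * D * E) / (4 * (A * C - B\<^sup>2))))
       else \<infinity>)"
proof (cases "C > 0")
  case C: True
  define A' where "A' = (A * C - B\<^sup>2) / C"
  define D' where "D' = D - B * E / C"
  define K where "K = sqrt (pi / C) * exp (E\<^sup>2 / (4 * C))"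
  have K: "K > 0" using C by (simp add: K_def)
  \<comment> \<open>Integrating out \<open>y\<close> leaves a Gaussian in \<open>x\<close> whose leading coefficient is the Schur complement \<open>A'\<close>.\<close>
  have inner: "(\<integral>\<^sup>+y. ennreal (exp (- (A * x\<^sup>2 + 2 * B * x * y + C * y\<^sup>2) + D * x + E * y)) \<partial>lborel)
      = ennreal (K * exp (- A' * x\<^sup>2 + D' * x))" for x
  proof -
    have "- A * x\<^sup>2 + D * x + (E - 2 * B * x)\<^sup>2 / (4 * C) = E\<^sup>2 / (4 * C) + (- A' * x\<^sup>2 + D' * x)"
      using C by (simp add: A'_def D'_def field_simps power2_eq_square)
    then have eq: "exp (- A * x\<^sup>2 + D * x) * (sqrt (pi / C) * exp ((E - 2 * B * x)\<^sup>2 / (4 * C)))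
        = K * exp (- A' * x\<^sup>2 + D' * x)"
      unfolding K_def by (simp add: exp_add[symmetric] algebra_simps)
    show ?thesis
      unfolding nn_integral_exp_binary_quadratic_inner nn_integral_exp_quadratic[OF C]
      by (subst ennreal_mult[symmetric]) (use C eq in auto)
  qed
  then have outer: "(\<integral>\<^sup>+x. \<integral>\<^sup>+y. ennreal (exp (- (A * x\<^sup>2 + 2 * B * x * y + C * y\<^sup>2) + D * x + E * y)) \<partial>lborel \<partial>lborel)
      = ennreal K * (\<integral>\<^sup>+x. ennreal (exp (- A' * x\<^sup>2 + D' * x)) \<partial>lborel)"
    using K by (simp add: ennreal_mult nn_integral_cmult)
  show ?thesis
  proof (cases "A * C - B\<^sup>2 > 0")
    case pos: True
    have A': "A' > 0" using C pos by (simp add: A'_def)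
    have closed_form: "K * (sqrt (pi / A') * exp (D'\<^sup>2 / (4 * A')))
        = pi / sqrt (A * C - B\<^sup>2) * exp ((A * E\<^sup>2 + C * D\<^sup>2 - 2 * B * D * E) / (4 * (A * C - B\<^sup>2)))"
    proof -
      have "sqrt C * sqrt A' = sqrt (A * C - B\<^sup>2)"
        using C by (simp add: A'_def real_sqrt_mult[symmetric])
      then have "sqrt (pi / C) * sqrt (pi / A') = pi / sqrt (A * C - B\<^sup>2)"
        by (simp add: real_sqrt_divide)
      moreover have "E\<^sup>2 / (4 * C) + D'\<^sup>2 / (4 * A')
          = (A * E\<^sup>2 + C * D\<^sup>2 - 2 * B * D * E) / (4 * (A * C - B\<^sup>2))"
        using C pos by (simp add: A'_def D'_def field_simps power2_eq_square)
      ultimately show ?thesis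
        unfolding K_def by (metis (no_types, lifting) exp_add mult.assoc mult.left_commute)
    qed
    show ?thesis
      unfolding outer nn_integral_exp_quadratic[OF A']
      by (subst ennreal_mult[symmetric]) (use A' K C pos closed_form in auto)
  next
    case False
    then have A': "A' \<le> 0" using C by (simp add: A'_def divide_nonpos_pos)
    show ?thesis
      unfolding outer nn_integral_exp_quadratic_divergent[OF A'] using K False
      by (simp add: ennreal_mult_eq_top_iff)
  qed
next
  case False
  then have "C \<le> 0" by simp
  then have "(\<integral>\<^sup>+y. ennreal (exp (- (A * x\<^sup>2 + 2 * B * x * y + C * y\<^sup>2) + D * x + E * y)) \<partial>lborel) = \<infinity>"
    for x
    unfolding nn_integral_exp_binary_quadratic_inner nn_integral_exp_quadratic_divergent[OF \<open>C \<le> 0\<close>]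
    by (simp add: ennreal_mult_eq_top_iff)
  with False show ?thesis by (simp add: ennreal_mult_top)
qed

lemma borel_measurable_gauss_density [measurable]: "gauss_density \<beta> \<in> borel_measurable borel"
  unfolding gauss_density_def by (intro borel_measurable_continuous_onI continuous_intros)

lemma nn_integral_gauss_measure:
  assumes [measurable]: "f \<in> borel_measurable borel"
  shows "(\<integral>\<^sup>+z. f z \<partial>gauss_measure \<beta>)
    = (\<integral>\<^sup>+x. \<integral>\<^sup>+y. ennreal (gauss_density \<beta> (Complex x y)) * f (Complex x y) \<partial>lborel \<partial>lborel)"
  unfolding gauss_measure_def
  by (subst nn_integral_density) (auto intro: nn_integral_lborel_complex)

lemma nn_integral_gauss_measure_exp_Re_quadratic:
  fixes \<beta> :: real and a c :: complex
  assumes \<beta>: "\<beta> > 0"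
  shows "(\<integral>\<^sup>+z. ennreal (exp (Re (a * z + c * z\<^sup>2))) \<partial>gauss_measure \<beta>)
    = (if cmod c < \<beta>
       then ennreal (\<beta> / sqrt (\<beta>\<^sup>2 - (cmod c)\<^sup>2)
         * exp ((\<beta> * (cmod a)\<^sup>2 + Re (cnj c * a\<^sup>2)) / (4 * (\<beta>\<^sup>2 - (cmod c)\<^sup>2))))
       else \<infinity>)"
proof -
  define A where "A = \<beta> - Re c"
  define B where "B = Im c"
  define C where "C = \<beta> + Re c"
  define D where "D = Re a"
  define E where "E = - Im a"
  have density: "ennreal (gauss_density \<beta> (Complex x y)) * ennreal (exp (Re (a * Complex x y + c * (Complex x y)\<^sup>2)))
      = ennreal (\<beta> / pi) * ennreal (exp (- (A * x\<^sup>2 + 2 * B * x * y + C * y\<^sup>2) + D * x + E * y))" for x y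
  proof -
    have "- \<beta> * (cmod (Complex x y))\<^sup>2 + Re (a * Complex x y + c * (Complex x y)\<^sup>2)
        = - (A * x\<^sup>2 + 2 * B * x * y + C * y\<^sup>2) + D * x + E * y"
      unfolding cmod_power2 by (simp add: A_def B_def C_def D_def E_def power2_eq_square algebra_simps)
    then show ?thesis
      using \<beta> by (simp add: gauss_density_def exp_add[symmetric] ennreal_mult[symmetric])
  qed
  have "(\<integral>\<^sup>+z. ennreal (exp (Re (a * z + c * z\<^sup>2))) \<partial>gauss_measure \<beta>)
      = (\<integral>\<^sup>+x. \<integral>\<^sup>+y. ennreal (gauss_density \<beta> (Complex x y))
          * ennreal (exp (Re (a * Complex x y + c * (Complex x y)\<^sup>2))) \<partial>lborel \<partial>lborel)"
    by (rule nn_integral_gauss_measure) measurable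
  also have "\<dots> = ennreal (\<beta> / pi)
      * (\<integral>\<^sup>+x. \<integral>\<^sup>+y. ennreal (exp (- (A * x\<^sup>2 + 2 * B * x * y + C * y\<^sup>2) + D * x + E * y)) \<partial>lborel \<partial>lborel)"
    unfolding density by (simp add: nn_integral_cmult)
  also have "\<dots> = ennreal (\<beta> / pi) * (if C > 0 \<and> A * C - B\<^sup>2 > 0
       then ennreal (pi / sqrt (A * C - B\<^sup>2) * exp ((A * E\<^sup>2 + C * D\<^sup>2 - 2 * B * D * E) / (4 * (A * C - B\<^sup>2))))
       else \<infinity>)"
    by (simp only: nn_integral_exp_binary_quadratic)
  also have "A * C - B\<^sup>2 = \<beta>\<^sup>2 - (cmod c)\<^sup>2"
    unfolding cmod_power2 by (simp add: A_def B_def C_def power2_eq_square algebra_simps)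
  also have "A * E\<^sup>2 + C * D\<^sup>2 - 2 * B * D * E = \<beta> * (cmod a)\<^sup>2 + Re (cnj c * a\<^sup>2)"
    unfolding cmod_power2 by (simp add: A_def B_def C_def D_def E_def power2_eq_square algebra_simps)
  also have "C > 0 \<and> \<beta>\<^sup>2 - (cmod c)\<^sup>2 > 0 \<longleftrightarrow> cmod c < \<beta>"
  proof
    assume "C > 0 \<and> \<beta>\<^sup>2 - (cmod c)\<^sup>2 > 0"
    then show "cmod c < \<beta>"
      using \<beta> by (auto intro: power2_less_imp_less)
  next
    assume "cmod c < \<beta>"
    moreover have "- Re c \<le> cmod c"
      using abs_Re_le_cmod[of c] by linarith
    ultimately show "C > 0 \<and> \<beta>\<^sup>2 - (cmod c)\<^sup>2 > 0"
      unfolding C_def by (simp add: power_strict_mono)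
  qed
  finally show ?thesis
    using \<beta> by (simp add: ennreal_mult[symmetric] ennreal_mult_top)
qed

lemma fock_norm_eq_nn_integral:
  assumes [measurable]: "f \<in> borel_measurable borel"
  shows "fock_norm p \<alpha> f
    = enn2real (\<integral>\<^sup>+z. ennreal (cmod (f z) powr p) \<partial>gauss_measure (\<alpha> * p / 2)) powr (1 / p)"
  unfolding fock_norm_def by (subst integral_eq_nn_integral) (auto simp: gauss_measure_def)

lemma nn_integral_gauss_measure_norm_exp_quadratic_powr:
  fixes \<alpha> p :: real and a c :: complex
  assumes \<alpha>: "\<alpha> > 0" and p: "p > 0"
  shows "(\<integral>\<^sup>+z. ennreal (cmod (exp (of_real \<alpha> * a * z + of_real (\<alpha> / 2) * c * z\<^sup>2)) powr p)
      \<partial>gauss_measure (\<alpha> * p / 2))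
    = (if cmod c < 1
       then ennreal (1 / sqrt (1 - (cmod c)\<^sup>2)
         * exp (\<alpha> * p / 2 * (((cmod a)\<^sup>2 + Re (cnj c * a\<^sup>2)) / (1 - (cmod c)\<^sup>2))))
       else \<infinity>)"
proof -
  define \<beta> where "\<beta> = \<alpha> * p / 2"
  have \<beta>: "\<beta> > 0" using \<alpha> p by (simp add: \<beta>_def)
  have scale: "of_real p * (of_real \<alpha> * a * z + of_real (\<alpha> / 2) * c * z\<^sup>2)
      = of_real (2 * \<beta>) * a * z + of_real \<beta> * c * z\<^sup>2" for z :: complex
    by (simp add: \<beta>_def algebra_simps)
  have "cmod (exp w) powr p = exp (Re (of_real p * w))" for w :: complex
    by (simp add: norm_exp_eq_Re powr_def)
  then have pointwise: "cmod (exp (of_real \<alpha> * a * z + of_real (\<alpha> / 2) * c * z\<^sup>2)) powr p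
      = exp (Re (of_real (2 * \<beta>) * a * z + of_real \<beta> * c * z\<^sup>2))" for z
    by (simp only: scale)
  have "(\<integral>\<^sup>+z. ennreal (cmod (exp (of_real \<alpha> * a * z + of_real (\<alpha> / 2) * c * z\<^sup>2)) powr p)
      \<partial>gauss_measure (\<alpha> * p / 2))
    = (if cmod (of_real \<beta> * c) < \<beta>
       then ennreal (\<beta> / sqrt (\<beta>\<^sup>2 - (cmod (of_real \<beta> * c))\<^sup>2)
         * exp ((\<beta> * (cmod (of_real (2 * \<beta>) * a))\<^sup>2 + Re (cnj (of_real \<beta> * c) * (of_real (2 * \<beta>) * a)\<^sup>2))
           / (4 * (\<beta>\<^sup>2 - (cmod (of_real \<beta> * c))\<^sup>2))))
       else \<infinity>)"
    unfolding pointwise \<beta>_def[symmetric]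
    by (rule nn_integral_gauss_measure_exp_Re_quadratic[OF \<beta>])
  also have "cmod (of_real \<beta> * c) = \<beta> * cmod c"
    using \<beta> by (simp add: norm_mult)
  also have "(cmod (of_real (2 * \<beta>) * a))\<^sup>2 = 4 * \<beta>\<^sup>2 * (cmod a)\<^sup>2"
    using \<beta> by (simp add: norm_mult power_mult_distrib)
  also have "Re (cnj (of_real \<beta> * c) * (of_real (2 * \<beta>) * a)\<^sup>2) = 4 * \<beta> ^ 3 * Re (cnj c * a\<^sup>2)"
  proof -
    have "cnj (of_real \<beta> * c) * (of_real (2 * \<beta>) * a)\<^sup>2 = of_real (4 * \<beta> ^ 3) * (cnj c * a\<^sup>2)"
      by (simp add: power2_eq_square power3_eq_cube algebra_simps)
    then show ?thesis
      by (simp only:) simp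
  qed
  also have "(if \<beta> * cmod c < \<beta>
       then ennreal (\<beta> / sqrt (\<beta>\<^sup>2 - (\<beta> * cmod c)\<^sup>2)
         * exp ((\<beta> * (4 * \<beta>\<^sup>2 * (cmod a)\<^sup>2) + 4 * \<beta> ^ 3 * Re (cnj c * a\<^sup>2))
           / (4 * (\<beta>\<^sup>2 - (\<beta> * cmod c)\<^sup>2))))
       else \<infinity>)
    = (if cmod c < 1
       then ennreal (1 / sqrt (1 - (cmod c)\<^sup>2)
         * exp (\<beta> * (((cmod a)\<^sup>2 + Re (cnj c * a\<^sup>2)) / (1 - (cmod c)\<^sup>2))))
       else \<infinity>)"
  proof (cases "cmod c < 1")
    case True
    define s where "s = 1 - (cmod c)\<^sup>2"
    have s: "s > 0"
      using True by (simp add: s_def power_less_one_iff)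
    have "\<beta> * cmod c < \<beta>"
      using True \<beta> by simp
    moreover have "\<beta>\<^sup>2 - (\<beta> * cmod c)\<^sup>2 = \<beta>\<^sup>2 * s"
      by (simp add: s_def power_mult_distrib algebra_simps)
    moreover have "\<beta> / sqrt (\<beta>\<^sup>2 * s) = 1 / sqrt s"
      using \<beta> by (simp add: real_sqrt_mult)
    moreover have "(\<beta> * (4 * \<beta>\<^sup>2 * (cmod a)\<^sup>2) + 4 * \<beta> ^ 3 * Re (cnj c * a\<^sup>2)) / (4 * (\<beta>\<^sup>2 * s))
        = \<beta> * (((cmod a)\<^sup>2 + Re (cnj c * a\<^sup>2)) / s)"
      using \<beta> s by (simp add: field_simps power2_eq_square power3_eq_cube)
    ultimately show ?thesis
      using True by (simp only: if_True s_def)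
  next
    case False
    then show ?thesis
      using \<beta> by simp
  qed
  finally show ?thesis unfolding \<beta>_def .
qed

theorem lemma5p1:
  fixes \<alpha> p :: real and a c :: complex and g :: "complex \<Rightarrow> complex"
  assumes "\<alpha> > 0" and "1 \<le> p"
    and "\<And>z. g z = exp (of_real \<alpha> * a * z + of_real (\<alpha> / 2) * c * z\<^sup>2)"
  shows "(g \<in> fock_space p \<alpha> \<longleftrightarrow> cmod c < 1) \<and>
    (cmod c < 1 \<longrightarrow>
      fock_norm p \<alpha> g =
        1 / (1 - (cmod c)\<^sup>2) powr (1 / (2 * p)) *
        exp ((\<alpha> / 2) * (((cmod a)\<^sup>2 + Re (cnj c * a\<^sup>2)) / (1 - (cmod c)\<^sup>2))))"
proof -
  define s where "s = 1 - (cmod c)\<^sup>2"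
  define Q where "Q = (cmod a)\<^sup>2 + Re (cnj c * a\<^sup>2)"
  have g: "g = (\<lambda>z. exp (of_real \<alpha> * a * z + of_real (\<alpha> / 2) * c * z\<^sup>2))"
    using assms(3) by auto
  have p: "p > 0" using assms(2) by simp
  have entire: "g holomorphic_on UNIV"
    unfolding g by (intro holomorphic_intros)
  then have [measurable]: "g \<in> borel_measurable borel"
    by (intro borel_measurable_continuous_onI holomorphic_on_imp_continuous_on)
  have integral: "(\<integral>\<^sup>+z. ennreal (cmod (g z) powr p) \<partial>gauss_measure (\<alpha> * p / 2))
      = (if cmod c < 1 then ennreal (1 / sqrt s * exp (\<alpha> * p / 2 * (Q / s))) else \<infinity>)"
    unfolding g s_def Q_def by (rule nn_integral_gauss_measure_norm_exp_quadratic_powr[OF assms(1) p])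
  have "g \<in> fock_space p \<alpha> \<longleftrightarrow> cmod c < 1"
    using entire by (simp add: fock_space_def integral)
  moreover have "fock_norm p \<alpha> g = 1 / s powr (1 / (2 * p)) * exp (\<alpha> / 2 * (Q / s))"
    if "cmod c < 1"
  proof -
    have s: "s > 0" using that by (simp add: s_def power_less_one_iff)
    have "fock_norm p \<alpha> g = (1 / sqrt s * exp (\<alpha> * p / 2 * (Q / s))) powr (1 / p)"
      using that s by (simp add: fock_norm_eq_nn_integral integral)
    also have "\<dots> = (1 / sqrt s) powr (1 / p) * exp (\<alpha> * p / 2 * (Q / s)) powr (1 / p)"
      by (rule powr_mult)
    also have "(1 / sqrt s) powr (1 / p) = 1 / s powr (1 / (2 * p))"
      using s by (simp add: powr_half_sqrt[symmetric] powr_powr powr_divide)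
    also have "exp (\<alpha> * p / 2 * (Q / s)) powr (1 / p) = exp (\<alpha> / 2 * (Q / s))"
      using p by (simp add: powr_def)
    finally show ?thesis .
  qed
  ultimately show ?thesis by (simp add: s_def Q_def)
qed

end
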